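(* Let $d\ge1$, $\eta>0$, and let $\mathcal{D}$ be the distribution on $\mathbb{R}^d\times\{-1,+1\}$ with $y$ uniform on $\{-1,+1\}$, $\bm{\mu}=(\eta,\dots,\eta)$, $\bm{x}\mid y=+1\sim\mathcal{N}(\bm{\mu},I)$ and $\bm{x}\mid y=-1\sim\mathcal{N}(-\bm{\mu},I)$. Let $0<\epsilon_{-1}<\epsilon_{+1}<\eta$. Consider linear classifiers $f(\bm{x})=\operatorname{sign}(\bm{w}^\top\bm{x}+b)$ with $\|\bm{w}\|_2=1$, $b\in\mathbb{R}$. Let $f_{nat}$ minimize the standard error $\Pr(f(\bm{x})\ne y)$, and let $f_{rob}$ minimize the class-dependent robust error $\Pr(\exists\bm{\delta},\ \|\bm{\delta}\|_\infty\le\epsilon_y:\ f(\bm{x}+\bm{\delta})\neq y)$ (adversarial training where perturbations of examples of class $y$ are bounded by $\epsilon_y$). With $\mathcal{R}_{nat}(f\mid y)=\Pr(f(\bm{x})\neq y\mid y)$, we have $$\mathcal{R}_{nat}(f_{nat}\mid -1)<\mathcal{R}_{nat}(f_{rob}\mid -1),\qquad \mathcal{R}_{nat}(f_{nat}\mid +1)>\mathcal{R}_{nat}(f_{rob}\mid +1).$$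
   Context: $I$ denotes the $d\times d$ identity matrix. *)

theory Defs
  imports "HOL-Probability.Probability"
begin

text \<open>Vectors in R^d are functions 'n \<Rightarrow> real over a finite index type 'n (d = CARD('n)).\<close>

definition inner_f :: "('n::finite \<Rightarrow> real) \<Rightarrow> ('n \<Rightarrow> real) \<Rightarrow> real" where
  "inner_f w x = (\<Sum>i\<in>UNIV. w i * x i)"

definition l2norm :: "('n::finite \<Rightarrow> real) \<Rightarrow> real" where
  "l2norm w = sqrt (\<Sum>i\<in>UNIV. (w i)\<^sup>2)"

definition linf_norm :: "('n::finite \<Rightarrow> real) \<Rightarrow> real" where
  "linf_norm v = Max (range (\<lambda>i. \<bar>v i\<bar>))"

definition lin_clf :: "('n::finite \<Rightarrow> real) \<Rightarrow> real \<Rightarrow> ('n \<Rightarrow> real) \<Rightarrow> real" where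
  "lin_clf w b x = sgn (inner_f w x + b)"

definition cond_dist :: "real \<Rightarrow> real \<Rightarrow> ('n::finite \<Rightarrow> real) measure" where
  "cond_dist eta y = PiM UNIV (\<lambda>i. density lborel (normal_density (y * eta) 1))"

definition nat_err_cond :: "real \<Rightarrow> ('n::finite \<Rightarrow> real) \<Rightarrow> real \<Rightarrow> real \<Rightarrow> real" where
  "nat_err_cond eta w b y = measure (cond_dist eta y) {x. lin_clf w b x \<noteq> y}"

definition nat_err :: "real \<Rightarrow> ('n::finite \<Rightarrow> real) \<Rightarrow> real \<Rightarrow> real" where
  "nat_err eta w b = (1/2) * nat_err_cond eta w b 1 + (1/2) * nat_err_cond eta w b (-1)"

definition rob_err_cond :: "real \<Rightarrow> real \<Rightarrow> ('n::finite \<Rightarrow> real) \<Rightarrow> real \<Rightarrow> real \<Rightarrow> real" where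
  "rob_err_cond eta epsy w b y =
     measure (cond_dist eta y) {x. \<exists>\<delta>. linf_norm \<delta> \<le> epsy \<and> lin_clf w b (\<lambda>i. x i + \<delta> i) \<noteq> y}"

text \<open>Robust error Pr(\<exists>\<delta>, |\<delta>|_inf \<le> eps_y. f(x+\<delta>) \<noteq> y), eps_{+1} = ep, eps_{-1} = em.\<close>
definition rob_err :: "real \<Rightarrow> real \<Rightarrow> real \<Rightarrow> ('n::finite \<Rightarrow> real) \<Rightarrow> real \<Rightarrow> real" where
  "rob_err eta em ep w b = (1/2) * rob_err_cond eta ep w b 1 + (1/2) * rob_err_cond eta em w b (-1)"

end

theory Submission
  imports Defs
begin

text \<open>For a unit vector \<open>w\<close> the score \<open>inner_f w x\<close> of class \<open>y\<close> is \<open>N(y \<eta> \<Sigma>w, 1)\<close>, and an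
  \<open>\<infinity>\<close>-adversary with budget \<open>\<epsilon>\<close> moves it by exactly \<open>\<epsilon> \<parallel>w\<parallel>\<^sub>1\<close> against the label. Hence both
  the natural and the robust error are, up to the factor \<open>1/2\<close>,
  \<open>\<Phi>(-s - b) + \<Phi>(-s + b)\<close> for a ``margin'' \<open>s\<close> and an ``offset'' \<open>b\<close>: for the natural error
  \<open>s = \<eta> \<Sigma>w\<close>, for the robust one \<open>s = \<eta> \<Sigma>w - (\<epsilon>\<^sub>+ + \<epsilon>\<^sub>-)/2 \<parallel>w\<parallel>\<^sub>1\<close> and \<open>b\<close> is shifted by
  \<open>(\<epsilon>\<^sub>+ - \<epsilon>\<^sub>-)/2 \<parallel>w\<parallel>\<^sub>1\<close>. This function strictly decreases in \<open>s\<close> and, for \<open>s > 0\<close>, strictly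
  increases in \<open>|b|\<close>; since \<open>\<Sigma>w \<le> \<parallel>w\<parallel>\<^sub>1 \<le> \<surd>d\<close>, both minimisers are \<open>w = (1,\<dots>,1)/\<surd>d\<close>
  with effective offset \<open>0\<close>. So \<open>b\<^sub>n\<^sub>a\<^sub>t = 0\<close> but \<open>b\<^sub>r\<^sub>o\<^sub>b = (\<epsilon>\<^sub>+ - \<epsilon>\<^sub>-) \<surd>d / 2 > 0\<close>: the robust
  boundary is pushed towards class \<open>-1\<close>, trading errors on class \<open>-1\<close> for errors on \<open>+1\<close>.\<close>

lemma measure_density_lborel_eq_set_integral:
  fixes f :: "real \<Rightarrow> real"
  assumes "f \<in> borel_measurable borel" "\<And>x. 0 \<le> f x" "finite_measure (density lborel f)"
    and "A \<in> sets borel"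
  shows "measure (density lborel f) A = (LBINT t:A. f t)"
proof -
  interpret finite_measure "density lborel f" by fact
  have "measure (density lborel f) A = integral\<^sup>L (density lborel f) (indicator A)"
    using assms(4) by simp
  also have "\<dots> = (LINT t|lborel. f t *\<^sub>R indicator A t)"
    using assms by (intro integral_density) auto
  finally show ?thesis
    by (simp add: set_lebesgue_integral_def mult.commute)
qed

lemma cdf_density_diff:
  fixes f :: "real \<Rightarrow> real"
  assumes "f \<in> borel_measurable borel" "\<And>x. 0 \<le> f x" "finite_measure (density lborel f)"
  shows "cdf (density lborel f) b - cdf (density lborel f) a = (LBINT t=a..b. f t)"
proof -
  interpret finite_borel_measure "density lborel f"
    using assms(3) by (simp add: finite_borel_measure_def finite_borel_measure_axioms_def)
  consider "a < b" | "a = b" | "b < a" by linarith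
  then show ?thesis
  proof cases
    case 1
    then show ?thesis
      using assms by (simp add: cdf_diff_eq measure_density_lborel_eq_set_integral interval_integral_Ioc)
  next
    case 3
    then have "cdf (density lborel f) a - cdf (density lborel f) b = (LBINT t=b..a. f t)"
      using assms by (simp add: cdf_diff_eq measure_density_lborel_eq_set_integral interval_integral_Ioc)
    then show ?thesis
      by (simp add: interval_integral_endpoints_reverse[of a b])
  qed simp
qed

lemma cdf_density_has_real_derivative:
  fixes f :: "real \<Rightarrow> real"
  assumes "continuous_on UNIV f" "\<And>x. 0 \<le> f x" "finite_measure (density lborel f)"
  shows "(cdf (density lborel f) has_real_derivative f x) (at x)"
proof -
  let ?F = "cdf (density lborel f)"
  have meas: "f \<in> borel_measurable borel"
    using assms(1) by (rule borel_measurable_continuous_onI)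
  have "at x within {x - 1..x + 1} = at x"
    by (intro at_within_interior) auto
  then have "((\<lambda>u. LBINT t=x..u. f t) has_real_derivative f x) (at x)"
    using interval_integral_FTC2[of "x - 1" x "x + 1" f x] continuous_on_subset[OF assms(1)]
    by (simp add: has_real_derivative_iff_has_vector_derivative)
  then have "((\<lambda>u. ?F x + (LBINT t=x..u. f t)) has_real_derivative f x) (at x)"
    by (auto intro!: derivative_eq_intros)
  moreover have "?F x + (LBINT t=x..u. f t) = ?F u" for u
    using cdf_density_diff[OF meas assms(2,3), where a=x and b=u] by simp
  ultimately show ?thesis by simp
qed

definition std_normal_cdf :: "real \<Rightarrow> real" where
  "std_normal_cdf = cdf (density lborel std_normal_density)"

lemma prob_space_std_normal: "prob_space (density lborel std_normal_density)"
  by (rule prob_space_normal_density) simp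

lemma std_normal_cdf_has_real_derivative:
  "(std_normal_cdf has_real_derivative std_normal_density x) (at x)"
  unfolding std_normal_cdf_def
proof (rule cdf_density_has_real_derivative)
  show "continuous_on UNIV std_normal_density"
    unfolding normal_density_def by (intro continuous_intros) auto
  show "finite_measure (density lborel std_normal_density)"
    using prob_space_std_normal by (rule prob_space.finite_measure)
qed simp

lemma std_normal_cdf_strict_mono: "strict_mono std_normal_cdf"
  by (rule strict_monoI, rule DERIV_pos_imp_increasing)
    (auto intro!: std_normal_cdf_has_real_derivative normal_density_pos)

lemma std_normal_density_less:
  assumes "u\<^sup>2 < v\<^sup>2"
  shows "std_normal_density v < std_normal_density u"
  using assms unfolding std_normal_density_def by (simp add: divide_strict_right_mono)

lemma measure_distributed_density:
  assumes "distributed M lborel X f" "A \<in> sets borel"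
  shows "measure (density lborel f) A = measure M (X -` A \<inter> space M)"
proof -
  have "X \<in> measurable M lborel"
    using assms(1) by (rule distributed_measurable)
  with assms show ?thesis
    by (simp add: distributed_distr_eq_density[symmetric] measure_distr)
qed

lemma measure_normal_density_affine:
  assumes "\<alpha> \<noteq> 0" "A \<in> sets borel"
  shows "measure (density lborel (normal_density m \<bar>\<alpha>\<bar>)) A
       = measure (density lborel std_normal_density) {x. m + \<alpha> * x \<in> A}"
proof -
  interpret prob_space "density lborel std_normal_density"
    by (rule prob_space_std_normal)
  have "distributed (density lborel std_normal_density) lborel (\<lambda>x. x) std_normal_density"
    by (simp add: distributed_def distr_id2)
  then have "distributed (density lborel std_normal_density) lborel (\<lambda>x. m + \<alpha> * x)
      (normal_density m \<bar>\<alpha>\<bar>)"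
    using normal_density_affine[of "\<lambda>x. x" 0 1 \<alpha> m] assms(1) by simp
  from measure_distributed_density[OF this assms(2)] show ?thesis
    by (simp add: vimage_def Collect_conj_eq[symmetric])
qed

lemma measure_normal_density_atMost:
  assumes "0 < \<sigma>"
  shows "measure (density lborel (normal_density m \<sigma>)) {..c} = std_normal_cdf ((c - m) / \<sigma>)"
proof -
  have "{x. m + \<sigma> * x \<in> {..c}} = {..(c - m) / \<sigma>}"
    using assms by (auto simp: field_simps)
  then show ?thesis
    using measure_normal_density_affine[of \<sigma> "{..c}" m] assms
    by (simp add: std_normal_cdf_def cdf_def2)
qed

lemma measure_normal_density_atLeast:
  assumes "0 < \<sigma>"
  shows "measure (density lborel (normal_density m \<sigma>)) {c..} = std_normal_cdf ((m - c) / \<sigma>)"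
proof -
  have "{x. m + (- \<sigma>) * x \<in> {c..}} = {..(m - c) / \<sigma>}"
    using assms by (auto simp: field_simps)
  then show ?thesis
    using measure_normal_density_affine[of "- \<sigma>" "{c..}" m] assms
    by (simp add: std_normal_cdf_def cdf_def2)
qed

text \<open>Twice the balanced error of the rule \<open>sign (t + b)\<close> when \<open>t \<sim> N(y s, 1)\<close> for \<open>y = \<plusminus>1\<close>.\<close>

definition threshold_err :: "real \<Rightarrow> real \<Rightarrow> real" where
  "threshold_err s b = std_normal_cdf (- s - b) + std_normal_cdf (- s + b)"

lemma threshold_err_has_real_derivative:
  "(threshold_err s has_real_derivative std_normal_density (b - s) - std_normal_density (b + s)) (at b)"
proof -
  have "std_normal_density (- s - b) = std_normal_density (b + s)"
    by (simp add: normal_density_def power2_commute)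
  then show ?thesis
    unfolding threshold_err_def
    by (auto intro!: derivative_eq_intros DERIV_chain2[OF std_normal_cdf_has_real_derivative])
qed

lemma threshold_err_minus: "threshold_err s (- b) = threshold_err s b"
  by (simp add: threshold_err_def)

lemma threshold_err_abs: "threshold_err s \<bar>b\<bar> = threshold_err s b"
  by (simp add: abs_if threshold_err_minus)

lemma threshold_err_strict_antimono: "s < s' \<Longrightarrow> threshold_err s' b < threshold_err s b"
  using strict_monoD[OF std_normal_cdf_strict_mono] by (simp add: threshold_err_def add_strict_mono)

lemma threshold_err_mono_abs:
  assumes "0 \<le> s" "\<bar>b\<bar> \<le> \<bar>b'\<bar>"
  shows "threshold_err s b \<le> threshold_err s b'"
proof -
  have "threshold_err s \<bar>b\<bar> \<le> threshold_err s \<bar>b'\<bar>"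
  proof (rule DERIV_nonneg_imp_increasing_open[OF assms(2)])
    fix x assume "\<bar>b\<bar> < x"
    then have "0 < x" by linarith
    then have "s = 0 \<or> (x - s)\<^sup>2 < (x + s)\<^sup>2"
      using assms(1) by (auto simp: power2_eq_square algebra_simps zero_less_mult_iff)
    then have "std_normal_density (x + s) \<le> std_normal_density (x - s)"
      using std_normal_density_less by fastforce
    then show "\<exists>y. (threshold_err s has_real_derivative y) (at x) \<and> 0 \<le> y"
      using threshold_err_has_real_derivative by fastforce
  qed (meson DERIV_isCont continuous_at_imp_continuous_on threshold_err_has_real_derivative)
  then show ?thesis by (simp add: threshold_err_abs)
qed

lemma threshold_err_strict_mono_abs:
  assumes "0 < s" "\<bar>b\<bar> < \<bar>b'\<bar>"
  shows "threshold_err s b < threshold_err s b'"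
proof -
  have "threshold_err s \<bar>b\<bar> < threshold_err s \<bar>b'\<bar>"
  proof (rule DERIV_pos_imp_increasing_open[OF assms(2)])
    fix x assume "\<bar>b\<bar> < x"
    then have "(x - s)\<^sup>2 < (x + s)\<^sup>2"
      using assms(1) by (auto simp: power2_eq_square algebra_simps)
    then have "std_normal_density (x + s) < std_normal_density (x - s)"
      by (rule std_normal_density_less)
    then show "\<exists>y. (threshold_err s has_real_derivative y) (at x) \<and> 0 < y"
      using threshold_err_has_real_derivative by fastforce
  qed (meson DERIV_isCont continuous_at_imp_continuous_on threshold_err_has_real_derivative)
  then show ?thesis by (simp add: threshold_err_abs)
qed

lemma threshold_err_argmin_unique:
  assumes "s \<le> s\<^sub>0" "0 < s\<^sub>0" "threshold_err s b \<le> threshold_err s\<^sub>0 0"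
  shows "s = s\<^sub>0" "b = 0"
proof -
  show "s = s\<^sub>0"
  proof (rule ccontr)
    assume "s \<noteq> s\<^sub>0"
    then have "max s 0 < s\<^sub>0" using assms(1,2) by simp
    then have "threshold_err s\<^sub>0 0 < threshold_err (max s 0) 0"
      by (rule threshold_err_strict_antimono)
    also have "\<dots> \<le> threshold_err (max s 0) b"
      by (rule threshold_err_mono_abs) auto
    also have "\<dots> \<le> threshold_err s b"
      using threshold_err_strict_antimono[of s "max s 0" b] by (cases "s < 0") auto
    finally show False using assms(3) by simp
  qed
  show "b = 0"
  proof (rule ccontr)
    assume "b \<noteq> 0"
    then have "threshold_err s\<^sub>0 0 < threshold_err s\<^sub>0 b"
      using assms(2) by (intro threshold_err_strict_mono_abs) auto
    with assms(3) \<open>s = s\<^sub>0\<close> show False by simp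
  qed
qed

lemma space_cond_dist: "space (cond_dist eta y :: ('n::finite \<Rightarrow> real) measure) = UNIV"
  by (simp add: cond_dist_def space_PiM)

lemma prob_space_cond_dist: "prob_space (cond_dist eta y :: ('n::finite \<Rightarrow> real) measure)"
  unfolding cond_dist_def by (intro prob_space_PiM prob_space_normal_density) simp

lemma sets_cond_dist [measurable_cong]:
  "sets (cond_dist eta y :: ('n::finite \<Rightarrow> real) measure) = sets (PiM UNIV (\<lambda>_. borel))"
  unfolding cond_dist_def by (intro sets_PiM_cong) auto

lemma distr_cond_dist_component:
  "distr (cond_dist eta y :: ('n::finite \<Rightarrow> real) measure) borel (\<lambda>x. x i)
     = density lborel (normal_density (y * eta) 1)"
proof -
  let ?N = "density lborel (normal_density (y * eta) 1)"
  interpret product_prob_space "\<lambda>_. ?N" UNIV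
    by (intro product_prob_spaceI prob_space_normal_density) simp
  have "distr (cond_dist eta y :: ('n \<Rightarrow> real) measure) borel (\<lambda>x. x i)
      = distr (PiM UNIV (\<lambda>_. ?N)) ?N (\<lambda>x. x i)"
    unfolding cond_dist_def by (rule distr_cong) auto
  also have "\<dots> = ?N"
    by (rule PiM_component) simp
  finally show ?thesis .
qed

lemma indep_vars_cond_dist_components:
  "prob_space.indep_vars (cond_dist eta y :: ('n::finite \<Rightarrow> real) measure) (\<lambda>_. borel)
     (\<lambda>i x. x i) UNIV"
proof -
  let ?M = "cond_dist eta y :: ('n \<Rightarrow> real) measure"
  interpret prob_space ?M by (rule prob_space_cond_dist)
  have meas: "(\<lambda>x. x i) \<in> measurable ?M borel" for i
    by measurable
  have "distr ?M (PiM UNIV (\<lambda>_. borel)) (\<lambda>x. \<lambda>i\<in>UNIV. x i)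
      = distr ?M (PiM UNIV (\<lambda>_. borel)) (\<lambda>x. x)"
    by (rule distr_cong) auto
  also have "\<dots> = ?M"
    by (rule distr_id2) (simp add: sets_cond_dist)
  also have "\<dots> = PiM UNIV (\<lambda>i. distr ?M borel (\<lambda>x. x i))"
    by (simp add: distr_cond_dist_component) (simp add: cond_dist_def)
  finally show ?thesis
    using meas by (subst indep_vars_iff_distr_eq_PiM) auto
qed

lemma distributed_cond_dist_inner_f:
  fixes w :: "'n::finite \<Rightarrow> real"
  assumes "w \<noteq> (\<lambda>_. 0)"
  shows "distributed (cond_dist eta y) lborel (inner_f w)
           (normal_density (y * eta * sum w UNIV) (l2norm w))"
proof -
  let ?M = "cond_dist eta y :: ('n \<Rightarrow> real) measure"
  interpret prob_space ?M by (rule prob_space_cond_dist)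
  \<comment> \<open>\<open>sum_indep_normal\<close> needs positive variances, so sum only over the support of \<open>w\<close>.\<close>
  define I where "I = {i. w i \<noteq> 0}"
  have "I \<noteq> {}"
    using assms by (auto simp: I_def fun_eq_iff)
  have "distributed ?M lborel (\<lambda>x. x i) (normal_density (y * eta) 1)" for i
  proof -
    have "distr ?M lborel (\<lambda>x. x i) = distr ?M borel (\<lambda>x. x i)"
      by (rule distr_cong) auto
    then show ?thesis
      by (auto simp: distributed_def distr_cond_dist_component)
  qed
  then have "distributed ?M lborel (\<lambda>x. w i * x i) (normal_density (w i * (y * eta)) \<bar>w i\<bar>)"
    if "i \<in> I" for i
    using normal_density_affine[of "\<lambda>x. x i" "y * eta" 1 "w i" 0] that by (simp add: I_def)
  moreover have "indep_vars (\<lambda>_. borel) (\<lambda>i x. w i * x i) I"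
    using indep_vars_compose2[OF indep_vars_cond_dist_components, of "\<lambda>i t. w i * t" "\<lambda>_. borel"]
    by (auto intro: indep_vars_subset)
  ultimately have "distributed ?M lborel (\<lambda>x. \<Sum>i\<in>I. w i * x i)
      (normal_density (\<Sum>i\<in>I. w i * (y * eta)) (sqrt (\<Sum>i\<in>I. \<bar>w i\<bar>\<^sup>2)))"
    using \<open>I \<noteq> {}\<close> by (intro sum_indep_normal) (auto simp: I_def)
  moreover have "(\<Sum>i\<in>I. f i) = (\<Sum>i\<in>UNIV. f i)" if "\<And>i. w i = 0 \<Longrightarrow> f i = 0"
    for f :: "'n \<Rightarrow> real"
    using that by (intro sum.mono_neutral_left) (auto simp: I_def)
  ultimately show ?thesis
    by (simp add: inner_f_def[abs_def] l2norm_def sum_distrib_right[symmetric] mult.commute)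
qed

lemma measure_cond_dist_inner_f_le:
  fixes w :: "'n::finite \<Rightarrow> real"
  assumes "l2norm w = 1"
  shows "measure (cond_dist eta y) {x. inner_f w x \<le> c} = std_normal_cdf (c - y * eta * sum w UNIV)"
proof -
  have "w \<noteq> (\<lambda>_. 0)"
    using assms by (auto simp: l2norm_def)
  moreover have "inner_f w -` {..c} \<inter> space (cond_dist eta y) = {x. inner_f w x \<le> c}"
    by (auto simp: space_cond_dist)
  ultimately show ?thesis
    using measure_distributed_density[OF distributed_cond_dist_inner_f[of w eta y], of "{..c}"]
    by (simp add: assms measure_normal_density_atMost)
qed

lemma measure_cond_dist_inner_f_ge:
  fixes w :: "'n::finite \<Rightarrow> real"
  assumes "l2norm w = 1"
  shows "measure (cond_dist eta y) {x. c \<le> inner_f w x} = std_normal_cdf (y * eta * sum w UNIV - c)"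
proof -
  have "w \<noteq> (\<lambda>_. 0)"
    using assms by (auto simp: l2norm_def)
  moreover have "inner_f w -` {c..} \<inter> space (cond_dist eta y) = {x. c \<le> inner_f w x}"
    by (auto simp: space_cond_dist)
  ultimately show ?thesis
    using measure_distributed_density[OF distributed_cond_dist_inner_f[of w eta y], of "{c..}"]
    by (simp add: assms measure_normal_density_atLeast)
qed

definition l1norm :: "('n::finite \<Rightarrow> real) \<Rightarrow> real" where
  "l1norm w = (\<Sum>i\<in>UNIV. \<bar>w i\<bar>)"

lemma inner_f_add: "inner_f w (\<lambda>i. x i + d i) = inner_f w x + inner_f w d"
  by (simp add: inner_f_def distrib_left sum.distrib)

lemma abs_le_linf_norm: "\<bar>d i\<bar> \<le> linf_norm (d :: 'n::finite \<Rightarrow> real)"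
  unfolding linf_norm_def by (rule Max_ge) auto

lemma abs_inner_f_le: "\<bar>inner_f w d\<bar> \<le> linf_norm d * l1norm w"
proof -
  have "\<bar>inner_f w d\<bar> \<le> (\<Sum>i\<in>UNIV. \<bar>w i\<bar> * \<bar>d i\<bar>)"
    unfolding inner_f_def abs_mult[symmetric] by (rule sum_abs)
  also have "\<dots> \<le> (\<Sum>i\<in>UNIV. \<bar>w i\<bar> * linf_norm d)"
    by (intro sum_mono mult_left_mono abs_le_linf_norm) simp
  finally show ?thesis
    by (simp add: l1norm_def sum_distrib_left mult.commute)
qed

lemma linf_norm_scaled_sgn: "linf_norm (\<lambda>i. c * sgn (w i)) \<le> \<bar>c\<bar>"
  unfolding linf_norm_def by (subst Max_le_iff) (auto simp: abs_mult sgn_if)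

lemma inner_f_scaled_sgn: "inner_f w (\<lambda>i. c * sgn (w i)) = c * l1norm w"
  unfolding inner_f_def l1norm_def sum_distrib_left by (rule sum.cong) (auto simp: sgn_if)

text \<open>Hoelder duality: on the \<open>\<infinity>\<close>-ball of radius \<open>e\<close>, \<open>inner_f w\<close> is bounded by
  \<open>e * l1norm w\<close> in absolute value, with both bounds attained at \<open>\<plusminus>e * sgn w\<close>.\<close>

lemma ex_linf_perturbation_inner_f_le_iff:
  assumes "0 \<le> e"
  shows "(\<exists>d. linf_norm d \<le> e \<and> inner_f w (\<lambda>i. x i + d i) \<le> c) \<longleftrightarrow> inner_f w x \<le> c + e * l1norm w"
proof
  assume "\<exists>d. linf_norm d \<le> e \<and> inner_f w (\<lambda>i. x i + d i) \<le> c"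
  then obtain d where "linf_norm d \<le> e" "inner_f w x + inner_f w d \<le> c"
    by (auto simp: inner_f_add)
  moreover have "linf_norm d * l1norm w \<le> e * l1norm w"
    using \<open>linf_norm d \<le> e\<close> by (simp add: l1norm_def mult_right_mono sum_nonneg)
  ultimately show "inner_f w x \<le> c + e * l1norm w"
    using abs_inner_f_le[of w d] by linarith
next
  assume "inner_f w x \<le> c + e * l1norm w"
  moreover have "inner_f w (\<lambda>i. x i + - e * sgn (w i)) = inner_f w x - e * l1norm w"
    by (simp only: inner_f_add inner_f_scaled_sgn)
  ultimately show "\<exists>d. linf_norm d \<le> e \<and> inner_f w (\<lambda>i. x i + d i) \<le> c"
    using linf_norm_scaled_sgn[of "- e" w] assms by (intro exI[of _ "\<lambda>i. - e * sgn (w i)"]) simp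
qed

lemma ex_linf_perturbation_inner_f_ge_iff:
  assumes "0 \<le> e"
  shows "(\<exists>d. linf_norm d \<le> e \<and> c \<le> inner_f w (\<lambda>i. x i + d i)) \<longleftrightarrow> c - e * l1norm w \<le> inner_f w x"
proof
  assume "\<exists>d. linf_norm d \<le> e \<and> c \<le> inner_f w (\<lambda>i. x i + d i)"
  then obtain d where "linf_norm d \<le> e" "c \<le> inner_f w x + inner_f w d"
    by (auto simp: inner_f_add)
  moreover have "linf_norm d * l1norm w \<le> e * l1norm w"
    using \<open>linf_norm d \<le> e\<close> by (simp add: l1norm_def mult_right_mono sum_nonneg)
  ultimately show "c - e * l1norm w \<le> inner_f w x"
    using abs_inner_f_le[of w d] by linarith
next
  assume "c - e * l1norm w \<le> inner_f w x"
  then show "\<exists>d. linf_norm d \<le> e \<and> c \<le> inner_f w (\<lambda>i. x i + d i)"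
    using linf_norm_scaled_sgn[of e w] assms
    by (intro exI[of _ "\<lambda>i. e * sgn (w i)"]) (simp add: inner_f_add inner_f_scaled_sgn)
qed

lemma lin_clf_neq_1_iff: "lin_clf w b x \<noteq> 1 \<longleftrightarrow> inner_f w x \<le> - b"
  by (auto simp: lin_clf_def sgn_if)

lemma lin_clf_neq_minus_1_iff: "lin_clf w b x \<noteq> - 1 \<longleftrightarrow> - b \<le> inner_f w x"
  by (auto simp: lin_clf_def sgn_if)

lemma rob_err_cond_pos:
  fixes w :: "'n::finite \<Rightarrow> real"
  assumes "l2norm w = 1" "0 \<le> e"
  shows "rob_err_cond eta e w b 1 = std_normal_cdf (e * l1norm w - b - eta * sum w UNIV)"
  using measure_cond_dist_inner_f_le[OF assms(1), of eta 1 "- b + e * l1norm w"]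
  by (simp add: rob_err_cond_def lin_clf_neq_1_iff ex_linf_perturbation_inner_f_le_iff[OF assms(2)])

lemma rob_err_cond_neg:
  fixes w :: "'n::finite \<Rightarrow> real"
  assumes "l2norm w = 1" "0 \<le> e"
  shows "rob_err_cond eta e w b (- 1) = std_normal_cdf (b + e * l1norm w - eta * sum w UNIV)"
proof -
  have "rob_err_cond eta e w b (- 1)
      = measure (cond_dist eta (- 1)) {x. - b - e * l1norm w \<le> inner_f w x}"
    by (simp add: rob_err_cond_def lin_clf_neq_minus_1_iff ex_linf_perturbation_inner_f_ge_iff[OF assms(2)])
  also have "\<dots> = std_normal_cdf (- 1 * eta * sum w UNIV - (- b - e * l1norm w))"
    by (rule measure_cond_dist_inner_f_ge[OF assms(1)])
  also have "\<dots> = std_normal_cdf (b + e * l1norm w - eta * sum w UNIV)"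
    by (rule arg_cong[where f = std_normal_cdf]) linarith
  finally show ?thesis .
qed

lemma linf_norm_le_0_iff: "linf_norm d \<le> 0 \<longleftrightarrow> d = (\<lambda>_. 0 :: real)"
proof
  assume "linf_norm d \<le> 0"
  then show "d = (\<lambda>_. 0)"
    using abs_le_linf_norm[of d] by (simp add: fun_eq_iff) (meson abs_le_zero_iff order_trans)
qed (simp add: linf_norm_def)

lemma rob_err_cond_zero: "rob_err_cond eta 0 w b y = nat_err_cond eta w b y"
  by (simp add: rob_err_cond_def nat_err_cond_def linf_norm_le_0_iff)

lemma nat_err_cond_pos:
  fixes w :: "'n::finite \<Rightarrow> real"
  assumes "l2norm w = 1"
  shows "nat_err_cond eta w b 1 = std_normal_cdf (- b - eta * sum w UNIV)"
  using rob_err_cond_pos[OF assms order_refl, of eta b] by (simp add: rob_err_cond_zero)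

lemma nat_err_cond_neg:
  fixes w :: "'n::finite \<Rightarrow> real"
  assumes "l2norm w = 1"
  shows "nat_err_cond eta w b (- 1) = std_normal_cdf (b - eta * sum w UNIV)"
  using rob_err_cond_neg[OF assms order_refl, of eta b] by (simp add: rob_err_cond_zero)

lemma nat_err_eq_threshold_err:
  fixes w :: "'n::finite \<Rightarrow> real"
  assumes "l2norm w = 1"
  shows "nat_err eta w b = threshold_err (eta * sum w UNIV) b / 2"
proof -
  have args: "- (eta * sum w UNIV) - b = - b - eta * sum w UNIV"
    "- (eta * sum w UNIV) + b = b - eta * sum w UNIV"
    by simp_all
  show ?thesis
    unfolding nat_err_def nat_err_cond_pos[OF assms] nat_err_cond_neg[OF assms] threshold_err_def args
    by simp
qed

lemma rob_err_eq_threshold_err: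
  fixes w :: "'n::finite \<Rightarrow> real"
  assumes "l2norm w = 1" "0 \<le> em" "0 \<le> ep"
  shows "rob_err eta em ep w b
       = threshold_err (eta * sum w UNIV - (ep + em) / 2 * l1norm w) (b - (ep - em) / 2 * l1norm w) / 2"
proof -
  have args: "- (eta * sum w UNIV - (ep + em) / 2 * l1norm w) - (b - (ep - em) / 2 * l1norm w)
      = ep * l1norm w - b - eta * sum w UNIV"
    "- (eta * sum w UNIV - (ep + em) / 2 * l1norm w) + (b - (ep - em) / 2 * l1norm w)
      = b + em * l1norm w - eta * sum w UNIV"
    by (simp_all add: field_simps)
  show ?thesis
    unfolding rob_err_def rob_err_cond_pos[OF assms(1,3)] rob_err_cond_neg[OF assms(1,2)]
      threshold_err_def args
    by simp
qed

lemma sum_le_l1norm: "sum w UNIV \<le> l1norm w"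
  unfolding l1norm_def by (rule sum_mono) simp

lemma l1norm_le_sqrt_card_l2norm:
  fixes w :: "'n::finite \<Rightarrow> real"
  shows "l1norm w \<le> sqrt (real CARD('n)) * l2norm w"
proof -
  have "(l1norm w)\<^sup>2 \<le> (\<Sum>i\<in>UNIV. \<bar>w i\<bar>\<^sup>2) * real CARD('n)"
    unfolding l1norm_def by (rule sum_squared_le_sum_of_squares)
  then have "l1norm w \<le> sqrt ((\<Sum>i\<in>UNIV. (w i)\<^sup>2) * real CARD('n))"
    by (simp add: real_le_rsqrt)
  then show ?thesis
    by (simp add: l2norm_def real_sqrt_mult mult.commute)
qed

definition uniform_unit :: "'n::finite \<Rightarrow> real" where
  "uniform_unit i = 1 / sqrt (real CARD('n))"

lemma l2norm_uniform_unit: "l2norm (uniform_unit :: 'n::finite \<Rightarrow> real) = 1"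
  by (simp add: l2norm_def uniform_unit_def power_divide)

lemma sum_uniform_unit: "sum (uniform_unit :: 'n::finite \<Rightarrow> real) UNIV = sqrt (real CARD('n))"
  by (simp add: uniform_unit_def real_div_sqrt)

lemma l1norm_uniform_unit: "l1norm (uniform_unit :: 'n::finite \<Rightarrow> real) = sqrt (real CARD('n))"
  by (simp add: l1norm_def uniform_unit_def real_div_sqrt)

lemma nat_err_minimizer:
  fixes wn :: "'n::finite \<Rightarrow> real"
  assumes "0 < eta" "l2norm wn = 1"
    and min: "\<And>(w :: 'n \<Rightarrow> real) b. l2norm w = 1 \<Longrightarrow> nat_err eta wn bn \<le> nat_err eta w b"
  shows "sum wn UNIV = sqrt (real CARD('n))" "bn = 0"
proof -
  let ?r = "sqrt (real CARD('n))"
  have "sum wn UNIV \<le> ?r"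
    using sum_le_l1norm[of wn] l1norm_le_sqrt_card_l2norm[of wn] assms(2) by simp
  then have le: "eta * sum wn UNIV \<le> eta * ?r"
    using assms(1) by simp
  have pos: "0 < eta * ?r"
    using assms(1) by simp
  have "threshold_err (eta * sum wn UNIV) bn \<le> threshold_err (eta * ?r) 0"
    using min[OF l2norm_uniform_unit, of 0]
    by (simp add: nat_err_eq_threshold_err assms(2) l2norm_uniform_unit sum_uniform_unit)
  note threshold_err_argmin_unique[OF le pos this]
  with assms(1) show "sum wn UNIV = ?r" "bn = 0" by simp_all
qed

lemma rob_err_minimizer:
  fixes wr :: "'n::finite \<Rightarrow> real"
  assumes "0 \<le> em" "0 \<le> ep" "(ep + em) / 2 < eta" "l2norm wr = 1"
    and min: "\<And>(w :: 'n \<Rightarrow> real) b. l2norm w = 1 \<Longrightarrow> rob_err eta em ep wr br \<le> rob_err eta em ep w b"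
  shows "sum wr UNIV = sqrt (real CARD('n))" "br = (ep - em) / 2 * sqrt (real CARD('n))"
proof -
  let ?r = "sqrt (real CARD('n))" and ?k = "(ep + em) / 2"
  have l1: "l1norm wr \<le> ?r"
    using l1norm_le_sqrt_card_l2norm[of wr] assms(4) by simp
  have eta_sum: "eta * sum wr UNIV \<le> eta * l1norm wr"
    using sum_le_l1norm[of wr] assms(1-3) by (intro mult_left_mono) auto
  have "eta * sum wr UNIV - ?k * l1norm wr \<le> (eta - ?k) * l1norm wr"
    using eta_sum by (simp only: left_diff_distrib)
  also have "\<dots> \<le> (eta - ?k) * ?r"
    using l1 assms(3) by simp
  finally have shift_le: "eta * sum wr UNIV - ?k * l1norm wr \<le> (eta - ?k) * ?r" .
  have pos: "0 < (eta - ?k) * ?r"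
    using assms(3) by simp
  have err: "threshold_err (eta * sum wr UNIV - ?k * l1norm wr) (br - (ep - em) / 2 * l1norm wr)
      \<le> threshold_err ((eta - ?k) * ?r) 0"
    using min[OF l2norm_uniform_unit, of "(ep - em) / 2 * ?r"] assms(1,2,4)
    by (simp add: rob_err_eq_threshold_err l2norm_uniform_unit sum_uniform_unit l1norm_uniform_unit
        algebra_simps)
  have shift: "eta * sum wr UNIV - ?k * l1norm wr = (eta - ?k) * ?r"
    and offset: "br - (ep - em) / 2 * l1norm wr = 0"
    using threshold_err_argmin_unique[OF shift_le pos err] by simp_all
  have "(eta - ?k) * ?r \<le> (eta - ?k) * l1norm wr"
    using shift eta_sum by (simp only: left_diff_distrib)
  then have "l1norm wr = ?r"
    using l1 assms(3) by simp
  with shift offset assms(1-3) show "sum wr UNIV = ?r" "br = (ep - em) / 2 * ?r"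
    by (simp_all add: algebra_simps)
qed

theorem theorem3:
  fixes eta em ep bn br :: real and wn wr :: "'n::finite \<Rightarrow> real"
  assumes "eta > 0" and "0 < em" and "em < ep" and "ep < eta"
    and "l2norm wn = 1"
    and "\<And>(w::'n \<Rightarrow> real) b. l2norm w = 1 \<Longrightarrow> nat_err eta wn bn \<le> nat_err eta w b"
    and "l2norm wr = 1"
    and "\<And>(w::'n \<Rightarrow> real) b. l2norm w = 1 \<Longrightarrow> rob_err eta em ep wr br \<le> rob_err eta em ep w b"
  shows "nat_err_cond eta wn bn (-1) < nat_err_cond eta wr br (-1)
       \<and> nat_err_cond eta wn bn 1 > nat_err_cond eta wr br 1"
proof -
  let ?s = "eta * sqrt (real CARD('n))"
  note nat = nat_err_minimizer[OF assms(1,5,6)]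
  have "0 \<le> em" "0 \<le> ep" "(ep + em) / 2 < eta"
    using assms(2-4) by simp_all
  note rob = rob_err_minimizer[OF this assms(7,8)]
  have "0 < (ep - em) / 2 * sqrt (real CARD('n))"
    using assms(3) by simp
  then have "0 < br"
    by (simp only: rob(2))
  moreover have "nat_err_cond eta wn bn (-1) = std_normal_cdf (- ?s)"
    and "nat_err_cond eta wn bn 1 = std_normal_cdf (- ?s)"
    by (simp_all add: nat_err_cond_neg[OF assms(5)] nat_err_cond_pos[OF assms(5)] nat)
  moreover have "nat_err_cond eta wr br (-1) = std_normal_cdf (br - ?s)"
    and "nat_err_cond eta wr br 1 = std_normal_cdf (- br - ?s)"
    by (simp_all add: nat_err_cond_neg[OF assms(7)] nat_err_cond_pos[OF assms(7)] rob(1))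
  ultimately show ?thesis
    using strict_monoD[OF std_normal_cdf_strict_mono] by simp
qed

end
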